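(* Let $(\Omega,+)$ be a group and let $a,b$ be subgroups of $\Omega$. Then the power set $\mathcal{P}$ of $\Omega$, and also its subset $\mathcal{P}^o$, are semitorsors under each of the following four ternary compositions: $(x,y,z)\mapsto (xyz)_{ab}:=\Gamma(x,a,y,b,z)$; $(x,y,z)\mapsto \check\Gamma(x,a,y,b,z)$; $(x,y,z)\mapsto (xyz)_b:=\Sigma(b,x,y,z)$; $(x,y,z)\mapsto \check\Sigma(b,x,y,z)$.
   Context: $(\Omega,+)$ is a group written additively but not necessarily abelian, with neutral element $o$. $\mathcal{P}$ is the set of all subsets of $\Omega$ and $\mathcal{P}^o$ the set of subsets containing $o$. For $x,a,y,b,z\in\mathcal{P}$: $\Gamma(x,a,y,b,z)=\{\omega\in\Omega:\exists\alpha\in a,\exists\beta\in b:\ \alpha+\omega+\beta\in y,\ \alpha+\omega\in z,\ \omega+\beta\in x\}$; $\check\Gamma(x,a,y,b,z)=\{\omega\in\Omega:\exists\alpha\in a,\exists\beta\in b:\ \beta+\omega+\alpha\in y,\ \omega+\alpha\in z,\ \beta+\omega\in x\}$; $\Sigma(b,x,y,z)=\{\omega\in\Omega:\exists\beta,\beta'\in b:\ \omega+\beta\in x,\ \omega+\beta'+\beta\in y,\ \omega+\beta'\in z\}$; $\check\Sigma(b,x,y,z)=\{\omega\in\Omega:\exists\beta,\beta'\in b:\ \beta+\omega\in x,\ \beta+\beta'+\omega\in y,\ \beta'+\omega\in z\}$. A semitorsor is a set $G$ with a map $G^3\to G$, $(x,y,z)\mapsto(xyz)$, satisfying the para-associative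 law $(xy(zuv))=(x(uzy)v)=((xyz)uv)$ for all $x,y,z,u,v\in G$. *)

theory Defs
  imports Main
begin

text \<open>The group (Omega,+) is the type 'a of class group_add (not necessarily abelian);
  its neutral element o is 0. Sets of elements are subsets of Omega.\<close>

definition is_subgroup :: "'a::group_add set \<Rightarrow> bool" where
  "is_subgroup a \<longleftrightarrow> 0 \<in> a \<and> (\<forall>x\<in>a. \<forall>y\<in>a. x + y \<in> a) \<and> (\<forall>x\<in>a. - x \<in> a)"

definition Gamma :: "'a::group_add set \<Rightarrow> 'a set \<Rightarrow> 'a set \<Rightarrow> 'a set \<Rightarrow> 'a set \<Rightarrow> 'a set" where
  "Gamma x a y b z = {w. \<exists>\<alpha>\<in>a. \<exists>\<beta>\<in>b. \<alpha> + w + \<beta> \<in> y \<and> \<alpha> + w \<in> z \<and> w + \<beta> \<in> x}"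

definition Gamma_check :: "'a::group_add set \<Rightarrow> 'a set \<Rightarrow> 'a set \<Rightarrow> 'a set \<Rightarrow> 'a set \<Rightarrow> 'a set" where
  "Gamma_check x a y b z = {w. \<exists>\<alpha>\<in>a. \<exists>\<beta>\<in>b. \<beta> + w + \<alpha> \<in> y \<and> w + \<alpha> \<in> z \<and> \<beta> + w \<in> x}"

definition Sigma_op :: "'a::group_add set \<Rightarrow> 'a set \<Rightarrow> 'a set \<Rightarrow> 'a set \<Rightarrow> 'a set" where
  "Sigma_op b x y z = {w. \<exists>\<beta>\<in>b. \<exists>\<beta>'\<in>b. w + \<beta> \<in> x \<and> w + \<beta>' + \<beta> \<in> y \<and> w + \<beta>' \<in> z}"

definition Sigma_check :: "'a::group_add set \<Rightarrow> 'a set \<Rightarrow> 'a set \<Rightarrow> 'a set \<Rightarrow> 'a set" where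
  "Sigma_check b x y z = {w. \<exists>\<beta>\<in>b. \<exists>\<beta>'\<in>b. \<beta> + w \<in> x \<and> \<beta> + \<beta>' + w \<in> y \<and> \<beta>' + w \<in> z}"

definition semitorsor :: "'b set \<Rightarrow> ('b \<Rightarrow> 'b \<Rightarrow> 'b \<Rightarrow> 'b) \<Rightarrow> bool" where
  "semitorsor G m \<longleftrightarrow>
     (\<forall>x\<in>G. \<forall>y\<in>G. \<forall>z\<in>G. m x y z \<in> G) \<and>
     (\<forall>x\<in>G. \<forall>y\<in>G. \<forall>z\<in>G. \<forall>u\<in>G. \<forall>v\<in>G.
        m x y (m z u v) = m x (m u z y) v \<and> m x (m u z y) v = m (m x y z) u v)"

end

(* Each of the three ways of nesting two compositions, (xy(zuv)), (x(uzy)v) and ((xyz)uv),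
   describes the same set: the points w from which one can walk through x, y, z, u, v in turn
   along a zigzag of translates, changing only one of the two translation parameters at each
   step.  Moving between the nested form and the zigzag form is a change of witnesses inside
   the subgroups.  The checked compositions are the plain ones for the opposite group, i.e.
   their conjugates under pointwise negation, and P^o is closed under all four compositions
   and under negation. *)

theory Submission
  imports Defs
begin

lemma subgroup_zero_mem [simp]: "is_subgroup a \<Longrightarrow> 0 \<in> a"
  and subgroup_add_mem [simp]: "is_subgroup a \<Longrightarrow> \<alpha> \<in> a \<Longrightarrow> \<beta> \<in> a \<Longrightarrow> \<alpha> + \<beta> \<in> a"
  and subgroup_uminus_mem [simp]: "is_subgroup a \<Longrightarrow> \<alpha> \<in> a \<Longrightarrow> - \<alpha> \<in> a"
  by (simp_all add: is_subgroup_def)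

lemma subgroup_diff_mem [simp]: "is_subgroup a \<Longrightarrow> \<alpha> \<in> a \<Longrightarrow> \<beta> \<in> a \<Longrightarrow> \<alpha> - \<beta> \<in> a"
  by (simp add: diff_conv_add_uminus del: add_uminus_conv_diff)

lemma semitorsor_UNIV_iff:
  "semitorsor UNIV m \<longleftrightarrow>
     (\<forall>x y z u v. m x y (m z u v) = m x (m u z y) v \<and> m x y (m z u v) = m (m x y z) u v)"
  unfolding semitorsor_def by (simp, metis)

lemma semitorsor_subset:
  assumes "semitorsor H m" and "G \<subseteq> H"
    and "\<And>x y z. x \<in> G \<Longrightarrow> y \<in> G \<Longrightarrow> z \<in> G \<Longrightarrow> m x y z \<in> G"
  shows "semitorsor G m"
  using assms unfolding semitorsor_def by blast

lemma semitorsor_conj_involution: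
  assumes "semitorsor G m"
    and "\<And>x. x \<in> G \<Longrightarrow> f x \<in> G" and "\<And>x. f (f x) = x"
    and "\<And>x y z. m' x y z = f (m (f x) (f y) (f z))"
  shows "semitorsor G m'"
  using assms unfolding semitorsor_def by simp

lemma mem_uminus_image_iff: "w \<in> uminus ` x \<longleftrightarrow> - w \<in> (x :: 'a::group_add set)"
  by (metis image_eqI image_iff minus_minus)

lemma uminus_image_involution: "uminus ` uminus ` x = (x :: 'a::group_add set)"
  by (simp add: image_image)

text \<open>The common value of the three composites \<open>(xy(zuv))\<close>, \<open>(x(uzy)v)\<close> and \<open>((xyz)uv)\<close>:
  the five sets are visited along a zigzag \<open>(0,\<beta>\<^sub>1), (\<alpha>\<^sub>1,\<beta>\<^sub>1), (\<alpha>\<^sub>1,\<beta>\<^sub>2), (\<alpha>\<^sub>2,\<beta>\<^sub>2), (\<alpha>\<^sub>2,0)\<close>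
  of translates \<open>\<alpha> + w + \<beta>\<close>.\<close>

definition Gamma_chain ::
    "'a::group_add set \<Rightarrow> 'a set \<Rightarrow> 'a set \<Rightarrow> 'a set \<Rightarrow> 'a set \<Rightarrow> 'a set \<Rightarrow> 'a set \<Rightarrow> 'a set" where
  "Gamma_chain a b x y z u v = {w. \<exists>\<alpha>\<^sub>1\<in>a. \<exists>\<alpha>\<^sub>2\<in>a. \<exists>\<beta>\<^sub>1\<in>b. \<exists>\<beta>\<^sub>2\<in>b.
     w + \<beta>\<^sub>1 \<in> x \<and> \<alpha>\<^sub>1 + w + \<beta>\<^sub>1 \<in> y \<and> \<alpha>\<^sub>1 + w + \<beta>\<^sub>2 \<in> z \<and> \<alpha>\<^sub>2 + w + \<beta>\<^sub>2 \<in> u \<and> \<alpha>\<^sub>2 + w \<in> v}"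

lemma GammaI:
  "\<alpha> \<in> a \<Longrightarrow> \<beta> \<in> b \<Longrightarrow> w + \<beta> \<in> x \<Longrightarrow> \<alpha> + w + \<beta> \<in> y \<Longrightarrow> \<alpha> + w \<in> z \<Longrightarrow> w \<in> Gamma x a y b z"
  by (auto simp: Gamma_def)

lemma Gamma_chainI:
  "\<alpha>\<^sub>1 \<in> a \<Longrightarrow> \<alpha>\<^sub>2 \<in> a \<Longrightarrow> \<beta>\<^sub>1 \<in> b \<Longrightarrow> \<beta>\<^sub>2 \<in> b \<Longrightarrow>
   w + \<beta>\<^sub>1 \<in> x \<Longrightarrow> \<alpha>\<^sub>1 + w + \<beta>\<^sub>1 \<in> y \<Longrightarrow> \<alpha>\<^sub>1 + w + \<beta>\<^sub>2 \<in> z \<Longrightarrow> \<alpha>\<^sub>2 + w + \<beta>\<^sub>2 \<in> u \<Longrightarrow> \<alpha>\<^sub>2 + w \<in> v \<Longrightarrow>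
   w \<in> Gamma_chain a b x y z u v"
  by (auto simp: Gamma_chain_def)

lemma Gamma_right_nested:
  assumes "is_subgroup a"
  shows "Gamma x a y b (Gamma z a u b v) = Gamma_chain a b x y z u v"
proof (intro set_eqI iffI)
  fix w
  assume "w \<in> Gamma x a y b (Gamma z a u b v)"
  then obtain \<alpha> \<beta> \<alpha>' \<beta>' where "\<alpha> \<in> a" "\<beta> \<in> b" "\<alpha>' \<in> a" "\<beta>' \<in> b" "w + \<beta> \<in> x" "\<alpha> + w + \<beta> \<in> y"
      "\<alpha> + w + \<beta>' \<in> z" "\<alpha>' + \<alpha> + w + \<beta>' \<in> u" "\<alpha>' + \<alpha> + w \<in> v"
    by (auto simp: Gamma_def add.assoc)
  with assms show "w \<in> Gamma_chain a b x y z u v"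
    by (intro Gamma_chainI[where \<alpha>\<^sub>1 = \<alpha> and \<alpha>\<^sub>2 = "\<alpha>' + \<alpha>" and \<beta>\<^sub>1 = \<beta> and \<beta>\<^sub>2 = \<beta>']) simp_all
next
  fix w
  assume "w \<in> Gamma_chain a b x y z u v"
  then obtain \<alpha>\<^sub>1 \<alpha>\<^sub>2 \<beta>\<^sub>1 \<beta>\<^sub>2 where chain: "\<alpha>\<^sub>1 \<in> a" "\<alpha>\<^sub>2 \<in> a" "\<beta>\<^sub>1 \<in> b" "\<beta>\<^sub>2 \<in> b" "w + \<beta>\<^sub>1 \<in> x"
      "\<alpha>\<^sub>1 + w + \<beta>\<^sub>1 \<in> y" "\<alpha>\<^sub>1 + w + \<beta>\<^sub>2 \<in> z" "\<alpha>\<^sub>2 + w + \<beta>\<^sub>2 \<in> u" "\<alpha>\<^sub>2 + w \<in> v"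
    by (auto simp: Gamma_chain_def)
  with assms have inner: "\<alpha>\<^sub>1 + w \<in> Gamma z a u b v"
    by (intro GammaI[where \<alpha> = "\<alpha>\<^sub>2 - \<alpha>\<^sub>1" and \<beta> = \<beta>\<^sub>2]) (simp_all flip: add.assoc)
  show "w \<in> Gamma x a y b (Gamma z a u b v)"
    by (rule GammaI[where \<alpha> = \<alpha>\<^sub>1 and \<beta> = \<beta>\<^sub>1]) (simp_all add: chain inner)
qed

lemma Gamma_middle_nested:
  assumes "is_subgroup a" and "is_subgroup b"
  shows "Gamma x a (Gamma u a z b y) b v = Gamma_chain a b x y z u v"
proof (intro set_eqI iffI)
  fix w
  assume "w \<in> Gamma x a (Gamma u a z b y) b v"
  then obtain \<alpha> \<beta> \<alpha>' \<beta>' where "\<alpha> \<in> a" "\<beta> \<in> b" "\<alpha>' \<in> a" "\<beta>' \<in> b" "w + \<beta> \<in> x"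
      "\<alpha>' + \<alpha> + w + \<beta> \<in> y" "\<alpha>' + \<alpha> + w + \<beta> + \<beta>' \<in> z" "\<alpha> + w + \<beta> + \<beta>' \<in> u" "\<alpha> + w \<in> v"
    by (auto simp: Gamma_def add.assoc)
  with assms show "w \<in> Gamma_chain a b x y z u v"
    by (intro Gamma_chainI[where \<alpha>\<^sub>1 = "\<alpha>' + \<alpha>" and \<alpha>\<^sub>2 = \<alpha> and \<beta>\<^sub>1 = \<beta> and \<beta>\<^sub>2 = "\<beta> + \<beta>'"])
      (simp_all add: add.assoc)
next
  fix w
  assume "w \<in> Gamma_chain a b x y z u v"
  then obtain \<alpha>\<^sub>1 \<alpha>\<^sub>2 \<beta>\<^sub>1 \<beta>\<^sub>2 where chain: "\<alpha>\<^sub>1 \<in> a" "\<alpha>\<^sub>2 \<in> a" "\<beta>\<^sub>1 \<in> b" "\<beta>\<^sub>2 \<in> b" "w + \<beta>\<^sub>1 \<in> x"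
      "\<alpha>\<^sub>1 + w + \<beta>\<^sub>1 \<in> y" "\<alpha>\<^sub>1 + w + \<beta>\<^sub>2 \<in> z" "\<alpha>\<^sub>2 + w + \<beta>\<^sub>2 \<in> u" "\<alpha>\<^sub>2 + w \<in> v"
    by (auto simp: Gamma_chain_def)
  with assms have inner: "\<alpha>\<^sub>2 + w + \<beta>\<^sub>1 \<in> Gamma u a z b y"
    by (intro GammaI[where \<alpha> = "\<alpha>\<^sub>1 - \<alpha>\<^sub>2" and \<beta> = "- \<beta>\<^sub>1 + \<beta>\<^sub>2"]) (simp_all flip: add.assoc)
  show "w \<in> Gamma x a (Gamma u a z b y) b v"
    by (rule GammaI[where \<alpha> = \<alpha>\<^sub>2 and \<beta> = \<beta>\<^sub>1]) (simp_all add: chain inner)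
qed

lemma Gamma_left_nested:
  assumes "is_subgroup b"
  shows "Gamma (Gamma x a y b z) a u b v = Gamma_chain a b x y z u v"
proof (intro set_eqI iffI)
  fix w
  assume "w \<in> Gamma (Gamma x a y b z) a u b v"
  then obtain \<alpha> \<beta> \<alpha>' \<beta>' where "\<alpha> \<in> a" "\<beta> \<in> b" "\<alpha>' \<in> a" "\<beta>' \<in> b" "w + \<beta> + \<beta>' \<in> x"
      "\<alpha>' + w + \<beta> + \<beta>' \<in> y" "\<alpha>' + w + \<beta> \<in> z" "\<alpha> + w + \<beta> \<in> u" "\<alpha> + w \<in> v"
    by (auto simp: Gamma_def add.assoc)
  with assms show "w \<in> Gamma_chain a b x y z u v"
    by (intro Gamma_chainI[where \<alpha>\<^sub>1 = \<alpha>' and \<alpha>\<^sub>2 = \<alpha> and \<beta>\<^sub>1 = "\<beta> + \<beta>'" and \<beta>\<^sub>2 = \<beta>])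
      (simp_all add: add.assoc)
next
  fix w
  assume "w \<in> Gamma_chain a b x y z u v"
  then obtain \<alpha>\<^sub>1 \<alpha>\<^sub>2 \<beta>\<^sub>1 \<beta>\<^sub>2 where chain: "\<alpha>\<^sub>1 \<in> a" "\<alpha>\<^sub>2 \<in> a" "\<beta>\<^sub>1 \<in> b" "\<beta>\<^sub>2 \<in> b" "w + \<beta>\<^sub>1 \<in> x"
      "\<alpha>\<^sub>1 + w + \<beta>\<^sub>1 \<in> y" "\<alpha>\<^sub>1 + w + \<beta>\<^sub>2 \<in> z" "\<alpha>\<^sub>2 + w + \<beta>\<^sub>2 \<in> u" "\<alpha>\<^sub>2 + w \<in> v"
    by (auto simp: Gamma_chain_def)
  with assms have inner: "w + \<beta>\<^sub>2 \<in> Gamma x a y b z"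
    by (intro GammaI[where \<alpha> = \<alpha>\<^sub>1 and \<beta> = "- \<beta>\<^sub>2 + \<beta>\<^sub>1"]) (simp_all flip: add.assoc)
  show "w \<in> Gamma (Gamma x a y b z) a u b v"
    by (rule GammaI[where \<alpha> = \<alpha>\<^sub>2 and \<beta> = \<beta>\<^sub>2]) (simp_all add: chain inner)
qed

lemma Gamma_para_assoc:
  assumes "is_subgroup a" and "is_subgroup b"
  shows "Gamma x a y b (Gamma z a u b v) = Gamma x a (Gamma u a z b y) b v"
    and "Gamma x a y b (Gamma z a u b v) = Gamma (Gamma x a y b z) a u b v"
  using assms by (simp_all add: Gamma_right_nested Gamma_middle_nested Gamma_left_nested)

text \<open>The same zigzag for translates \<open>w + \<gamma> + \<beta>\<close>.  Since both parameters now act on the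
  right, some witnesses below are conjugates in \<open>b\<close>.\<close>

definition Sigma_chain ::
    "'a::group_add set \<Rightarrow> 'a set \<Rightarrow> 'a set \<Rightarrow> 'a set \<Rightarrow> 'a set \<Rightarrow> 'a set \<Rightarrow> 'a set" where
  "Sigma_chain b x y z u v = {w. \<exists>\<beta>\<^sub>1\<in>b. \<exists>\<beta>\<^sub>2\<in>b. \<exists>\<gamma>\<^sub>1\<in>b. \<exists>\<gamma>\<^sub>2\<in>b.
     w + \<beta>\<^sub>1 \<in> x \<and> w + \<gamma>\<^sub>1 + \<beta>\<^sub>1 \<in> y \<and> w + \<gamma>\<^sub>1 + \<beta>\<^sub>2 \<in> z \<and> w + \<gamma>\<^sub>2 + \<beta>\<^sub>2 \<in> u \<and> w + \<gamma>\<^sub>2 \<in> v}"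

lemma Sigma_opI:
  "\<beta> \<in> b \<Longrightarrow> \<beta>' \<in> b \<Longrightarrow> w + \<beta> \<in> x \<Longrightarrow> w + \<beta>' + \<beta> \<in> y \<Longrightarrow> w + \<beta>' \<in> z \<Longrightarrow> w \<in> Sigma_op b x y z"
  by (auto simp: Sigma_op_def)

lemma Sigma_chainI:
  "\<beta>\<^sub>1 \<in> b \<Longrightarrow> \<beta>\<^sub>2 \<in> b \<Longrightarrow> \<gamma>\<^sub>1 \<in> b \<Longrightarrow> \<gamma>\<^sub>2 \<in> b \<Longrightarrow>
   w + \<beta>\<^sub>1 \<in> x \<Longrightarrow> w + \<gamma>\<^sub>1 + \<beta>\<^sub>1 \<in> y \<Longrightarrow> w + \<gamma>\<^sub>1 + \<beta>\<^sub>2 \<in> z \<Longrightarrow> w + \<gamma>\<^sub>2 + \<beta>\<^sub>2 \<in> u \<Longrightarrow> w + \<gamma>\<^sub>2 \<in> v \<Longrightarrow>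
   w \<in> Sigma_chain b x y z u v"
  by (auto simp: Sigma_chain_def)

lemma Sigma_right_nested:
  assumes "is_subgroup b"
  shows "Sigma_op b x y (Sigma_op b z u v) = Sigma_chain b x y z u v"
proof (intro set_eqI iffI)
  fix w
  assume "w \<in> Sigma_op b x y (Sigma_op b z u v)"
  then obtain \<beta> \<beta>' \<delta> \<delta>' where "\<beta> \<in> b" "\<beta>' \<in> b" "\<delta> \<in> b" "\<delta>' \<in> b" "w + \<beta> \<in> x"
      "w + \<beta>' + \<beta> \<in> y" "w + \<beta>' + \<delta> \<in> z" "w + \<beta>' + \<delta>' + \<delta> \<in> u" "w + \<beta>' + \<delta>' \<in> v"
    by (auto simp: Sigma_op_def add.assoc)
  with assms show "w \<in> Sigma_chain b x y z u v"
    by (intro Sigma_chainI[where \<beta>\<^sub>1 = \<beta> and \<beta>\<^sub>2 = \<delta> and \<gamma>\<^sub>1 = \<beta>' and \<gamma>\<^sub>2 = "\<beta>' + \<delta>'"])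
      (simp_all add: add.assoc)
next
  fix w
  assume "w \<in> Sigma_chain b x y z u v"
  then obtain \<beta>\<^sub>1 \<beta>\<^sub>2 \<gamma>\<^sub>1 \<gamma>\<^sub>2 where chain: "\<beta>\<^sub>1 \<in> b" "\<beta>\<^sub>2 \<in> b" "\<gamma>\<^sub>1 \<in> b" "\<gamma>\<^sub>2 \<in> b" "w + \<beta>\<^sub>1 \<in> x"
      "w + \<gamma>\<^sub>1 + \<beta>\<^sub>1 \<in> y" "w + \<gamma>\<^sub>1 + \<beta>\<^sub>2 \<in> z" "w + \<gamma>\<^sub>2 + \<beta>\<^sub>2 \<in> u" "w + \<gamma>\<^sub>2 \<in> v"
    by (auto simp: Sigma_chain_def)
  with assms have inner: "w + \<gamma>\<^sub>1 \<in> Sigma_op b z u v"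
    by (intro Sigma_opI[where \<beta> = \<beta>\<^sub>2 and \<beta>' = "- \<gamma>\<^sub>1 + \<gamma>\<^sub>2"]) (simp_all flip: add.assoc)
  show "w \<in> Sigma_op b x y (Sigma_op b z u v)"
    by (rule Sigma_opI[where \<beta> = \<beta>\<^sub>1 and \<beta>' = \<gamma>\<^sub>1]) (simp_all add: chain inner)
qed

lemma Sigma_middle_nested:
  assumes "is_subgroup b"
  shows "Sigma_op b x (Sigma_op b u z y) v = Sigma_chain b x y z u v"
proof (intro set_eqI iffI)
  fix w
  assume "w \<in> Sigma_op b x (Sigma_op b u z y) v"
  then obtain \<beta> \<beta>' \<delta> \<delta>' where "\<beta> \<in> b" "\<beta>' \<in> b" "\<delta> \<in> b" "\<delta>' \<in> b" "w + \<beta> \<in> x"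
      "w + \<beta>' + \<beta> + \<delta>' \<in> y" "w + \<beta>' + \<beta> + \<delta>' + \<delta> \<in> z" "w + \<beta>' + \<beta> + \<delta> \<in> u" "w + \<beta>' \<in> v"
    by (auto simp: Sigma_op_def add.assoc)
  with assms show "w \<in> Sigma_chain b x y z u v"
    by (intro Sigma_chainI[where \<beta>\<^sub>1 = \<beta> and \<beta>\<^sub>2 = "\<beta> + \<delta>" and \<gamma>\<^sub>1 = "\<beta>' + \<beta> + \<delta>' - \<beta>"
          and \<gamma>\<^sub>2 = \<beta>'])
      (simp_all add: add_diff_eq flip: add.assoc)
next
  fix w
  assume "w \<in> Sigma_chain b x y z u v"
  then obtain \<beta>\<^sub>1 \<beta>\<^sub>2 \<gamma>\<^sub>1 \<gamma>\<^sub>2 where chain: "\<beta>\<^sub>1 \<in> b" "\<beta>\<^sub>2 \<in> b" "\<gamma>\<^sub>1 \<in> b" "\<gamma>\<^sub>2 \<in> b" "w + \<beta>\<^sub>1 \<in> x"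
      "w + \<gamma>\<^sub>1 + \<beta>\<^sub>1 \<in> y" "w + \<gamma>\<^sub>1 + \<beta>\<^sub>2 \<in> z" "w + \<gamma>\<^sub>2 + \<beta>\<^sub>2 \<in> u" "w + \<gamma>\<^sub>2 \<in> v"
    by (auto simp: Sigma_chain_def)
  with assms have inner: "w + \<gamma>\<^sub>2 + \<beta>\<^sub>1 \<in> Sigma_op b u z y"
    by (intro Sigma_opI[where \<beta> = "- \<beta>\<^sub>1 + \<beta>\<^sub>2" and \<beta>' = "- \<beta>\<^sub>1 - \<gamma>\<^sub>2 + \<gamma>\<^sub>1 + \<beta>\<^sub>1"])
      (simp_all add: add_diff_eq flip: add.assoc)
  show "w \<in> Sigma_op b x (Sigma_op b u z y) v"
    by (rule Sigma_opI[where \<beta> = \<beta>\<^sub>1 and \<beta>' = \<gamma>\<^sub>2]) (simp_all add: chain inner)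
qed

lemma Sigma_left_nested:
  assumes "is_subgroup b"
  shows "Sigma_op b (Sigma_op b x y z) u v = Sigma_chain b x y z u v"
proof (intro set_eqI iffI)
  fix w
  assume "w \<in> Sigma_op b (Sigma_op b x y z) u v"
  then obtain \<beta> \<beta>' \<delta> \<delta>' where "\<beta> \<in> b" "\<beta>' \<in> b" "\<delta> \<in> b" "\<delta>' \<in> b" "w + \<beta> + \<delta> \<in> x"
      "w + \<beta> + \<delta>' + \<delta> \<in> y" "w + \<beta> + \<delta>' \<in> z" "w + \<beta>' + \<beta> \<in> u" "w + \<beta>' \<in> v"
    by (auto simp: Sigma_op_def add.assoc)
  with assms show "w \<in> Sigma_chain b x y z u v"
    by (intro Sigma_chainI[where \<beta>\<^sub>1 = "\<beta> + \<delta>" and \<beta>\<^sub>2 = \<beta> and \<gamma>\<^sub>1 = "\<beta> + \<delta>' - \<beta>" and \<gamma>\<^sub>2 = \<beta>'])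
      (simp_all add: add_diff_eq flip: add.assoc)
next
  fix w
  assume "w \<in> Sigma_chain b x y z u v"
  then obtain \<beta>\<^sub>1 \<beta>\<^sub>2 \<gamma>\<^sub>1 \<gamma>\<^sub>2 where chain: "\<beta>\<^sub>1 \<in> b" "\<beta>\<^sub>2 \<in> b" "\<gamma>\<^sub>1 \<in> b" "\<gamma>\<^sub>2 \<in> b" "w + \<beta>\<^sub>1 \<in> x"
      "w + \<gamma>\<^sub>1 + \<beta>\<^sub>1 \<in> y" "w + \<gamma>\<^sub>1 + \<beta>\<^sub>2 \<in> z" "w + \<gamma>\<^sub>2 + \<beta>\<^sub>2 \<in> u" "w + \<gamma>\<^sub>2 \<in> v"
    by (auto simp: Sigma_chain_def)
  with assms have inner: "w + \<beta>\<^sub>2 \<in> Sigma_op b x y z"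
    by (intro Sigma_opI[where \<beta> = "- \<beta>\<^sub>2 + \<beta>\<^sub>1" and \<beta>' = "- \<beta>\<^sub>2 + \<gamma>\<^sub>1 + \<beta>\<^sub>2"])
      (simp_all flip: add.assoc)
  show "w \<in> Sigma_op b (Sigma_op b x y z) u v"
    by (rule Sigma_opI[where \<beta> = \<beta>\<^sub>2 and \<beta>' = \<gamma>\<^sub>2]) (simp_all add: chain inner)
qed

lemma Sigma_para_assoc:
  assumes "is_subgroup b"
  shows "Sigma_op b x y (Sigma_op b z u v) = Sigma_op b x (Sigma_op b u z y) v"
    and "Sigma_op b x y (Sigma_op b z u v) = Sigma_op b (Sigma_op b x y z) u v"
  using assms by (simp_all add: Sigma_right_nested Sigma_middle_nested Sigma_left_nested)

lemma zero_mem_Gamma: "0 \<in> a \<Longrightarrow> 0 \<in> b \<Longrightarrow> 0 \<in> x \<Longrightarrow> 0 \<in> y \<Longrightarrow> 0 \<in> z \<Longrightarrow> 0 \<in> Gamma x a y b z"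
  by (rule GammaI[where \<alpha> = 0 and \<beta> = 0]) simp_all

lemma zero_mem_Sigma_op: "0 \<in> b \<Longrightarrow> 0 \<in> x \<Longrightarrow> 0 \<in> y \<Longrightarrow> 0 \<in> z \<Longrightarrow> 0 \<in> Sigma_op b x y z"
  by (rule Sigma_opI[where \<beta> = 0 and \<beta>' = 0]) simp_all

lemma Gamma_checkI:
  "\<alpha> \<in> a \<Longrightarrow> \<beta> \<in> b \<Longrightarrow> \<beta> + w \<in> x \<Longrightarrow> \<beta> + w + \<alpha> \<in> y \<Longrightarrow> w + \<alpha> \<in> z \<Longrightarrow> w \<in> Gamma_check x a y b z"
  by (auto simp: Gamma_check_def)

lemma Gamma_check_conv_Gamma:
  assumes "is_subgroup a" and "is_subgroup b"
  shows "Gamma_check x a y b z = uminus ` Gamma (uminus ` x) a (uminus ` y) b (uminus ` z)"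
proof (intro set_eqI iffI)
  fix w
  assume "w \<in> Gamma_check x a y b z"
  then obtain \<alpha> \<beta> where "\<alpha> \<in> a" "\<beta> \<in> b" "\<beta> + w \<in> x" "\<beta> + w + \<alpha> \<in> y" "w + \<alpha> \<in> z"
    unfolding Gamma_check_def by blast
  with assms have "- w \<in> Gamma (uminus ` x) a (uminus ` y) b (uminus ` z)"
    by (intro GammaI[where \<alpha> = "- \<alpha>" and \<beta> = "- \<beta>"])
      (simp_all add: mem_uminus_image_iff minus_add add.assoc diff_conv_add_uminus
        del: add_uminus_conv_diff)
  then show "w \<in> uminus ` Gamma (uminus ` x) a (uminus ` y) b (uminus ` z)"
    by (simp add: mem_uminus_image_iff)
next
  fix w
  assume "w \<in> uminus ` Gamma (uminus ` x) a (uminus ` y) b (uminus ` z)"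
  then obtain \<alpha> \<beta> where "\<alpha> \<in> a" "\<beta> \<in> b"
      "- (- w + \<beta>) \<in> x" "- (\<alpha> + - w + \<beta>) \<in> y" "- (\<alpha> + - w) \<in> z"
    unfolding Gamma_def mem_uminus_image_iff by blast
  with assms show "w \<in> Gamma_check x a y b z"
    by (intro Gamma_checkI[where \<alpha> = "- \<alpha>" and \<beta> = "- \<beta>"])
      (simp_all add: minus_add add.assoc diff_conv_add_uminus del: add_uminus_conv_diff)
qed

lemma Sigma_checkI:
  "\<beta> \<in> b \<Longrightarrow> \<beta>' \<in> b \<Longrightarrow> \<beta> + w \<in> x \<Longrightarrow> \<beta> + \<beta>' + w \<in> y \<Longrightarrow> \<beta>' + w \<in> z \<Longrightarrow> w \<in> Sigma_check b x y z"
  by (auto simp: Sigma_check_def)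

lemma Sigma_check_conv_Sigma_op:
  assumes "is_subgroup b"
  shows "Sigma_check b x y z = uminus ` Sigma_op b (uminus ` x) (uminus ` y) (uminus ` z)"
proof (intro set_eqI iffI)
  fix w
  assume "w \<in> Sigma_check b x y z"
  then obtain \<beta> \<beta>' where "\<beta> \<in> b" "\<beta>' \<in> b" "\<beta> + w \<in> x" "\<beta> + \<beta>' + w \<in> y" "\<beta>' + w \<in> z"
    unfolding Sigma_check_def by blast
  with assms have "- w \<in> Sigma_op b (uminus ` x) (uminus ` y) (uminus ` z)"
    by (intro Sigma_opI[where \<beta> = "- \<beta>" and \<beta>' = "- \<beta>'"])
      (simp_all add: mem_uminus_image_iff minus_add add.assoc diff_conv_add_uminus
        del: add_uminus_conv_diff)
  then show "w \<in> uminus ` Sigma_op b (uminus ` x) (uminus ` y) (uminus ` z)"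
    by (simp add: mem_uminus_image_iff)
next
  fix w
  assume "w \<in> uminus ` Sigma_op b (uminus ` x) (uminus ` y) (uminus ` z)"
  then obtain \<beta> \<beta>' where "\<beta> \<in> b" "\<beta>' \<in> b"
      "- (- w + \<beta>) \<in> x" "- (- w + \<beta>' + \<beta>) \<in> y" "- (- w + \<beta>') \<in> z"
    unfolding Sigma_op_def mem_uminus_image_iff by blast
  with assms show "w \<in> Sigma_check b x y z"
    by (intro Sigma_checkI[where \<beta> = "- \<beta>" and \<beta>' = "- \<beta>'"])
      (simp_all add: minus_add add.assoc diff_conv_add_uminus del: add_uminus_conv_diff)
qed

lemma semitorsor_Gamma:
  assumes "is_subgroup a" and "is_subgroup b"
  shows "semitorsor UNIV (\<lambda>x y z. Gamma x a y b z)"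
  using Gamma_para_assoc[OF assms] by (simp add: semitorsor_UNIV_iff)

lemma semitorsor_Sigma_op:
  assumes "is_subgroup b"
  shows "semitorsor UNIV (\<lambda>x y z. Sigma_op b x y z)"
  using Sigma_para_assoc[OF assms] by (simp add: semitorsor_UNIV_iff)

lemma semitorsor_Gamma_check:
  assumes "is_subgroup a" and "is_subgroup b"
    and "semitorsor G (\<lambda>x y z. Gamma x a y b z)" and "\<And>x. x \<in> G \<Longrightarrow> uminus ` x \<in> G"
  shows "semitorsor G (\<lambda>x y z. Gamma_check x a y b z)"
  using assms(3,4) uminus_image_involution Gamma_check_conv_Gamma[OF assms(1,2)]
  by (rule semitorsor_conj_involution)

lemma semitorsor_Sigma_check:
  assumes "is_subgroup b"
    and "semitorsor G (\<lambda>x y z. Sigma_op b x y z)" and "\<And>x. x \<in> G \<Longrightarrow> uminus ` x \<in> G"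
  shows "semitorsor G (\<lambda>x y z. Sigma_check b x y z)"
  using assms(2,3) uminus_image_involution Sigma_check_conv_Sigma_op[OF assms(1)]
  by (rule semitorsor_conj_involution)

theorem theorem3p1:
  fixes a b :: "'a::group_add set"
  assumes "is_subgroup a" and "is_subgroup b"
  shows "semitorsor (UNIV :: 'a set set) (\<lambda>x y z. Gamma x a y b z)
       \<and> semitorsor {x :: 'a set. 0 \<in> x} (\<lambda>x y z. Gamma x a y b z)
       \<and> semitorsor (UNIV :: 'a set set) (\<lambda>x y z. Gamma_check x a y b z)
       \<and> semitorsor {x :: 'a set. 0 \<in> x} (\<lambda>x y z. Gamma_check x a y b z)
       \<and> semitorsor (UNIV :: 'a set set) (\<lambda>x y z. Sigma_op b x y z)
       \<and> semitorsor {x :: 'a set. 0 \<in> x} (\<lambda>x y z. Sigma_op b x y z)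
       \<and> semitorsor (UNIV :: 'a set set) (\<lambda>x y z. Sigma_check b x y z)
       \<and> semitorsor {x :: 'a set. 0 \<in> x} (\<lambda>x y z. Sigma_check b x y z)"
proof -
  let ?P\<^sub>0 = "{x :: 'a set. 0 \<in> x}"
  have uminus_closed: "uminus ` x \<in> ?P\<^sub>0" if "x \<in> ?P\<^sub>0" for x
    using that by force
  have Gamma: "semitorsor UNIV (\<lambda>x y z. Gamma x a y b z)"
    using assms by (rule semitorsor_Gamma)
  have Gamma\<^sub>0: "semitorsor ?P\<^sub>0 (\<lambda>x y z. Gamma x a y b z)"
    using Gamma by (rule semitorsor_subset) (use assms in \<open>auto intro: zero_mem_Gamma\<close>)
  have Sigma: "semitorsor UNIV (\<lambda>x y z. Sigma_op b x y z)"
    using assms(2) by (rule semitorsor_Sigma_op)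
  have Sigma\<^sub>0: "semitorsor ?P\<^sub>0 (\<lambda>x y z. Sigma_op b x y z)"
    using Sigma by (rule semitorsor_subset) (use assms in \<open>auto intro: zero_mem_Sigma_op\<close>)
  show ?thesis
    using Gamma Gamma\<^sub>0 Sigma Sigma\<^sub>0 uminus_closed
    by (auto intro: semitorsor_Gamma_check[OF assms] semitorsor_Sigma_check[OF assms(2)])
qed

end
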